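(* Let $M$ be a dihedral axial decomposition algebra of Majorana type $(\eta,\eta)$ over a field $\mathbb{F}$ with $\operatorname{char}\mathbb{F}\neq2$, where $\eta\in\mathbb{F}\setminus\{0,1,\tfrac12\}$, with generating axes $(a_i)_{i\in\mathbb{Z}}$. Let $x,y\in M$ satisfy (i) $f_2(x)=-\tau_0(x)$, $f_3(x)=x$ and $x+f_1(x)+f_2(x)=0$; (ii) $f_1(y)=-y$ and $\tau_0(y)=y$. Suppose there exist $\alpha_0,\dots,\alpha_k\in\mathbb{F}$ with $x+y+\sum_{i=0}^k\alpha_i(a_{i+1}-a_{-i})=0$. Then: (1) $\alpha_k(a_{k+2}-a_{-k-2})+\sum_{i=1}^{k+1}(\alpha_{i+1}+2\alpha_i+2\alpha_{i-1}+\alpha_{i-2})(a_i-a_{-i})=0$, where $\alpha_{k+1}=\alpha_{k+2}=0$ and $\alpha_{-1}=-\alpha_0$. Moreover, if $\alpha_k\neq0$, then $\operatorname{adim}\le 2k+4$, and if $\operatorname{adim}=2k+4$, then $M$ satisfies an odd relation. (2) If $x=0$, then $\alpha_k(a_{k+1}-a_{-k-1})+\sum_{i=1}^k(\alpha_i+\alpha_{i-1})(a_i-a_{-i})=0$. Moreover, if $\alpha_k\neq0$, then $\operatorname{adim}\le 2k+2$, and if $\operatorname{adim}=2k+2$, then $M$ satisfies an odd relation.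
   Context: $M$ is a commutative nonassociative $\mathbb{F}$-algebra. With $\Phi(0)=0,\Phi(1)=1,\Phi(2)=\Phi(3)=\eta$, an axis $a\in M$ is an element together with a decomposition $M=\bigoplus_{i=0}^3M^i(a)$ such that $xa=\Phi(i)x$ for $x\in M^i(a)$, $M^1(a)=\mathbb{F}a$, and $M^0(a)M^i(a)\subset M^i(a)$ for all $i$, $M^2(a)M^2(a)\subset M^0(a)\oplus M^1(a)$, $M^2(a)M^3(a)\subset M^3(a)$, $M^3(a)M^3(a)\subset M^0(a)\oplus M^1(a)\oplus M^2(a)$. The Miyamoto involution $\tau(a)$ is the automorphism acting as $1$ on $M^0(a)\oplus M^1(a)\oplus M^2(a)$ and $-1$ on $M^3(a)$. $M$ is dihedral (of Majorana type $(\eta,\eta)$) with axes $(a_i)_{i\in\mathbb{Z}}$ if: $M$ is generated by the $a_i$; $a_i\mapsto a_{i+1}$ extends to an automorphism of $M$; and $\tau(a_j)(a_i)=a_{2j-i}$ for all $i,j$. Notation: $f_i$ is the automorphism with $f_i(a_j)=a_{i+j}$ for all $j$; $\tau_0=\tau(a_0)$. The axial dimension $\operatorname{adim}$ is $\dim_{\mathbb{F}}\operatorname{Span}\{a_i: i\in\mathbb{Z}\}$. $M$ satisfies an odd relation if either $\operatorname{adim}=2m$ and there are $\beta_1,\dots,\beta_m\in\mathbb{F}$ with $\beta_m\neq0$ and $\sum_{i=1}^m\beta_i(a_i-a_{-i})=0$, or $\operatorname{adim}=2m+1$ and there are $\beta_0,\dots,\beta_m\in\mathbb{F}$ with $\beta_m\neq0$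 and $\sum_{i=0}^m\beta_i(a_{i+1}-a_{-i})=0$. *)

theory Defs
  imports Complex_Main "HOL-Library.Extended_Nat"
begin

definition comm_algebra :: "('a::field \<Rightarrow> 'm::ab_group_add \<Rightarrow> 'm) \<Rightarrow> ('m \<Rightarrow> 'm \<Rightarrow> 'm) \<Rightarrow> bool" where
  "comm_algebra sc mul \<longleftrightarrow> vector_space sc \<and>
     (\<forall>x y z. mul (x + y) z = mul x z + mul y z) \<and>
     (\<forall>c x y. mul (sc c x) y = sc c (mul x y)) \<and>
     (\<forall>x y. mul x y = mul y x)"

definition Phi :: "'a::field \<Rightarrow> nat \<Rightarrow> 'a" where
  "Phi eta i = (if i = 0 then 0 else if i = 1 then 1 else eta)"

definition setprod :: "('m \<Rightarrow> 'm \<Rightarrow> 'm) \<Rightarrow> 'm set \<Rightarrow> 'm set \<Rightarrow> 'm set" where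
  "setprod mul A B = {mul x y | x y. x \<in> A \<and> y \<in> B}"

definition setsum2 :: "'m::ab_group_add set \<Rightarrow> 'm set \<Rightarrow> 'm set" where
  "setsum2 A B = {x + y | x y. x \<in> A \<and> y \<in> B}"

definition is_axis :: "('a::field \<Rightarrow> 'm::ab_group_add \<Rightarrow> 'm) \<Rightarrow> ('m \<Rightarrow> 'm \<Rightarrow> 'm) \<Rightarrow> 'a
     \<Rightarrow> 'm \<Rightarrow> (nat \<Rightarrow> 'm set) \<Rightarrow> bool" where
  "is_axis sc mul eta a D \<longleftrightarrow>
     (\<forall>i\<le>3. module.subspace sc (D i)) \<and>
     (\<forall>x. \<exists>!v::nat \<Rightarrow> 'm. v 0 \<in> D 0 \<and> v 1 \<in> D 1 \<and> v 2 \<in> D 2 \<and> v 3 \<in> D 3 \<and>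
              (\<forall>j>3. v j = 0) \<and> x = v 0 + v 1 + v 2 + v 3) \<and>
     (\<forall>i\<le>3. \<forall>x\<in>D i. mul x a = sc (Phi eta i) x) \<and>
     D 1 = {sc c a | c. True} \<and>
     (\<forall>i\<le>3. setprod mul (D 0) (D i) \<subseteq> D i) \<and>
     setprod mul (D 2) (D 2) \<subseteq> setsum2 (D 0) (D 1) \<and>
     setprod mul (D 2) (D 3) \<subseteq> D 3 \<and>
     setprod mul (D 3) (D 3) \<subseteq> setsum2 (setsum2 (D 0) (D 1)) (D 2)"

definition miyamoto :: "('m::ab_group_add) set \<Rightarrow> 'm set \<Rightarrow> 'm set \<Rightarrow> 'm set \<Rightarrow> 'm \<Rightarrow> 'm" where
  "miyamoto D0 D1 D2 D3 x = (THE y. \<exists>x0 x1 x2 x3. x0 \<in> D0 \<and> x1 \<in> D1 \<and> x2 \<in> D2 \<and> x3 \<in> D3 \<and>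
        x = x0 + x1 + x2 + x3 \<and> y = x0 + x1 + x2 - x3)"

definition tau :: "(nat \<Rightarrow> 'm::ab_group_add set) \<Rightarrow> 'm \<Rightarrow> 'm" where
  "tau D = miyamoto (D 0) (D 1) (D 2) (D 3)"

definition is_aut :: "('a::field \<Rightarrow> 'm::ab_group_add \<Rightarrow> 'm) \<Rightarrow> ('m \<Rightarrow> 'm \<Rightarrow> 'm) \<Rightarrow> ('m \<Rightarrow> 'm) \<Rightarrow> bool" where
  "is_aut sc mul f \<longleftrightarrow> bij f \<and> (\<forall>x y. f (x + y) = f x + f y) \<and> (\<forall>c x. f (sc c x) = sc c (f x)) \<and>
     (\<forall>x y. f (mul x y) = mul (f x) (f y))"

inductive_set gen_subalg :: "('a::field \<Rightarrow> 'm::ab_group_add \<Rightarrow> 'm) \<Rightarrow> ('m \<Rightarrow> 'm \<Rightarrow> 'm) \<Rightarrow> 'm set \<Rightarrow> 'm set"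
  for sc mul S where
  gen_base: "x \<in> S \<Longrightarrow> x \<in> gen_subalg sc mul S"
| gen_add: "x \<in> gen_subalg sc mul S \<Longrightarrow> y \<in> gen_subalg sc mul S \<Longrightarrow> x + y \<in> gen_subalg sc mul S"
| gen_scale: "x \<in> gen_subalg sc mul S \<Longrightarrow> sc c x \<in> gen_subalg sc mul S"
| gen_mul: "x \<in> gen_subalg sc mul S \<Longrightarrow> y \<in> gen_subalg sc mul S \<Longrightarrow> mul x y \<in> gen_subalg sc mul S"

definition dihedral :: "('a::field \<Rightarrow> 'm::ab_group_add \<Rightarrow> 'm) \<Rightarrow> ('m \<Rightarrow> 'm \<Rightarrow> 'm) \<Rightarrow> 'a
     \<Rightarrow> (int \<Rightarrow> 'm) \<Rightarrow> (int \<Rightarrow> nat \<Rightarrow> 'm set) \<Rightarrow> bool" where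
  "dihedral sc mul eta a D \<longleftrightarrow>
     comm_algebra sc mul \<and>
     (\<forall>i. is_axis sc mul eta (a i) (D i)) \<and>
     gen_subalg sc mul (range a) = UNIV \<and>
     (\<exists>f. is_aut sc mul f \<and> (\<forall>i. f (a i) = a (i + 1))) \<and>
     (\<forall>i j. tau (D j) (a i) = a (2 * j - i))"

definition fsh :: "('a::field \<Rightarrow> 'm::ab_group_add \<Rightarrow> 'm) \<Rightarrow> ('m \<Rightarrow> 'm \<Rightarrow> 'm) \<Rightarrow> (int \<Rightarrow> 'm) \<Rightarrow> int \<Rightarrow> 'm \<Rightarrow> 'm" where
  "fsh sc mul a i = (THE f. is_aut sc mul f \<and> (\<forall>j. f (a j) = a (i + j)))"

definition adim :: "('a::field \<Rightarrow> 'm::ab_group_add \<Rightarrow> 'm) \<Rightarrow> (int \<Rightarrow> 'm) \<Rightarrow> enat" where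
  "adim sc a = (if \<exists>B. finite B \<and> module.span sc B = module.span sc (range a)
                then enat (vector_space.dim sc (range a)) else \<infinity>)"

definition odd_relation :: "('a::field \<Rightarrow> 'm::ab_group_add \<Rightarrow> 'm) \<Rightarrow> (int \<Rightarrow> 'm) \<Rightarrow> bool" where
  "odd_relation sc a \<longleftrightarrow>
     (\<exists>m::nat. m \<ge> 1 \<and> adim sc a = enat (2 * m) \<and>
        (\<exists>\<beta>::nat \<Rightarrow> 'a. \<beta> m \<noteq> 0 \<and> (\<Sum>i\<in>{1..m}. sc (\<beta> i) (a (int i) - a (- int i))) = 0)) \<or>
     (\<exists>m::nat. adim sc a = enat (2 * m + 1) \<and>
        (\<exists>\<beta>::nat \<Rightarrow> 'a. \<beta> m \<noteq> 0 \<and> (\<Sum>i\<in>{0..m}. sc (\<beta> i) (a (int i + 1) - a (- int i))) = 0))"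

definition alpha_ext :: "(nat \<Rightarrow> 'a::field) \<Rightarrow> nat \<Rightarrow> int \<Rightarrow> 'a" where
  "alpha_ext \<alpha> k j = (if j = -1 then - \<alpha> 0 else if 0 \<le> j \<and> j \<le> int k then \<alpha> (nat j) else 0)"

end

theory Submission
  imports Defs
begin

(* Let f be the automorphism a_i \<mapsto> a_(i+1) and S = \<Sum> \<alpha>_i (a_(i+1) - a_(-i)), so that x + y + S = 0.
   As 1 + f + f^2 kills x and 1 + f kills y, the palindromic operator (1 + f)(1 + f + f^2) kills S;
   if x = 0, already 1 + f does.  Expanding p(f) S in the a_m and shifting back by the centre of p,
   palindromy turns p(f) S = 0 into an antisymmetric relation \<Sum> \<beta>_i (a_i - a_(-i)) = 0 whose
   coefficients are those of the theorem, with top coefficient \<alpha>_k.  Translating such a relation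
   with \<beta>_n \<noteq> 0 to centre t expresses a_(t+n) through a_(t-n), ..., a_(t+n-1) and a_(t-n) through
   a_(t-n+1), ..., a_(t+n), so a_(-n), ..., a_(n-1) span all axes and adim \<le> 2n; at equality the
   relation is itself an odd relation. *)

lemma is_aut_comp:
  assumes "is_aut sc mul g" and "is_aut sc mul h"
  shows "is_aut sc mul (g \<circ> h)"
  using assms bij_comp[of h g] by (simp add: is_aut_def)

lemma aut_eq_on_generators:
  assumes gen: "gen_subalg sc mul (range a) = UNIV"
    and g: "is_aut sc mul g" and h: "is_aut sc mul h" and eq: "\<And>j. g (a j) = h (a j)"
  shows "g = h"
proof
  fix z
  have "z \<in> gen_subalg sc mul (range a)" using gen by simp
  then show "g z = h z"
    by induction (use eq g h in \<open>auto simp: is_aut_def\<close>)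
qed

lemma fsh_eqI:
  assumes "gen_subalg sc mul (range a) = UNIV"
    and "is_aut sc mul g" and "\<And>j. g (a j) = a (i + j)"
  shows "fsh sc mul a i = g"
  unfolding fsh_def
  by (rule the_equality) (use assms aut_eq_on_generators[OF assms(1)] in auto)

lemma dihedral_shift_automorphism:
  assumes "dihedral sc mul eta a D"
  obtains f where "vector_space sc" "Vector_Spaces.linear sc sc f" "bij f"
    "\<And>j. f (a j) = a (j + 1)" "fsh sc mul a 1 = f" "fsh sc mul a 2 = f \<circ> f"
proof -
  obtain f where alg: "comm_algebra sc mul" and gen: "gen_subalg sc mul (range a) = UNIV"
    and aut: "is_aut sc mul f" and shift: "\<And>j. f (a j) = a (j + 1)"
    using assms unfolding dihedral_def by blast
  have vs: "vector_space sc"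
    using alg by (simp add: comm_algebra_def)
  moreover have "Vector_Spaces.linear sc sc f"
    using aut vs by (simp add: Vector_Spaces.linear_iff is_aut_def)
  moreover have "fsh sc mul a 1 = f"
    by (rule fsh_eqI[OF gen aut]) (simp add: shift add.commute)
  moreover have "fsh sc mul a 2 = f \<circ> f"
    by (rule fsh_eqI[OF gen is_aut_comp[OF aut aut]]) (simp add: shift algebra_simps)
  ultimately show thesis
    using that aut shift by (simp add: is_aut_def)
qed

context vector_space
begin

lemma linear_funpow_shift:
  fixes a :: "int \<Rightarrow> 'b"
  assumes "Vector_Spaces.linear scale scale g" and "\<And>j. g (a j) = a (j + e)"
  shows "Vector_Spaces.linear scale scale (g ^^ n) \<and> (\<forall>j. (g ^^ n) (a j) = a (j + int n * e))"
proof (induction n)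
  case 0
  then show ?case by (simp add: linear_ident)
next
  case (Suc n)
  then show ?case
    using Vector_Spaces.linear_compose[OF _ assms(1), where f = "g ^^ n"]
    by (simp add: assms(2) algebra_simps comp_def)
qed

lemma linear_shift_by_int:
  fixes a :: "int \<Rightarrow> 'b" and t :: int
  assumes lin: "Vector_Spaces.linear scale scale f" and "bij f"
    and shift: "\<And>j. f (a j) = a (j + 1)"
  shows "\<exists>h. Vector_Spaces.linear scale scale h \<and> (\<forall>j. h (a j) = a (j + t))"
proof -
  have lin_inv: "Vector_Spaces.linear scale scale (inv f)"
    using module_pair.bij_module_hom_imp_inv_module_hom[of scale scale scale scale f] \<open>bij f\<close> lin
    by (simp add: module_hom_iff_linear module_pair_def module_axioms)
  have inv_shift: "inv f (a j) = a (j + - 1)" for j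
    using shift[of "j - 1"] bij_is_inj[OF \<open>bij f\<close>] by (simp add: inv_f_eq)
  show ?thesis
  proof (cases "0 \<le> t")
    case True
    then show ?thesis
      using linear_funpow_shift[where a = a and e = 1 and n = "nat t", OF lin shift] by auto
  next
    case False
    then show ?thesis
      using linear_funpow_shift[where a = a and e = "- 1" and n = "nat (- t)", OF lin_inv inv_shift]
      by auto
  qed
qed

lemma shifted_symmetric_relation:
  assumes "Vector_Spaces.linear scale scale h" and "\<And>j. h (a j) = a (j + t)"
    and "(\<Sum>i=1..n. scale (\<beta> i) (a (int i) - a (- int i))) = 0"
  shows "(\<Sum>i=1..n. scale (\<beta> i) (a (t + int i) - a (t - int i))) = 0"
proof -
  interpret h: Vector_Spaces.linear scale scale h by fact
  from assms(3) have "h (\<Sum>i=1..n. scale (\<beta> i) (a (int i) - a (- int i))) = 0" by simp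
  then show ?thesis by (simp add: h.sum h.scale h.diff assms(2) algebra_simps)
qed

lemma outer_axes_in_span:
  fixes a :: "int \<Rightarrow> 'b" and t :: int
  assumes "\<beta> n \<noteq> 0" and "1 \<le> n"
    and rel: "(\<Sum>i=1..n. scale (\<beta> i) (a (t + int i) - a (t - int i))) = 0"
  shows "a (t + int n) \<in> span (a ` {t - int n..t + int n - 1})"
    and "a (t - int n) \<in> span (a ` {t - int n + 1..t + int n})"
proof -
  define R where "R = (\<Sum>i=1..n-1. scale (\<beta> i) (a (t + int i) - a (t - int i)))"
  have "{1..n} = insert n {1..n-1}" using \<open>1 \<le> n\<close> by auto
  with rel \<open>1 \<le> n\<close> have "scale (\<beta> n) (a (t + int n) - a (t - int n)) = - R"
    by (simp add: R_def add_eq_0_iff)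
  then have diff: "a (t + int n) - a (t - int n) = - scale (inverse (\<beta> n)) R"
    using \<open>\<beta> n \<noteq> 0\<close> by (metis scale_minus_right scale_scale left_inverse scale_one)
  have R_span: "R \<in> span (a ` {t - int n + 1..t + int n - 1})"
    unfolding R_def by (intro span_sum span_scale span_diff span_base) auto
  have "span (a ` {t - int n + 1..t + int n - 1}) \<subseteq> span (a ` {t - int n..t + int n - 1})"
    by (auto intro!: span_mono)
  moreover have "a (t - int n) \<in> span (a ` {t - int n..t + int n - 1})"
    using \<open>1 \<le> n\<close> by (auto intro!: span_base)
  moreover have "a (t + int n) = a (t - int n) - scale (inverse (\<beta> n)) R"
    using diff by (simp add: algebra_simps)
  ultimately show "a (t + int n) \<in> span (a ` {t - int n..t + int n - 1})"
    using R_span by (auto intro!: span_diff span_scale)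
  have "span (a ` {t - int n + 1..t + int n - 1}) \<subseteq> span (a ` {t - int n + 1..t + int n})"
    by (auto intro!: span_mono)
  moreover have "a (t + int n) \<in> span (a ` {t - int n + 1..t + int n})"
    using \<open>1 \<le> n\<close> by (auto intro!: span_base)
  moreover have "a (t - int n) = a (t + int n) + scale (inverse (\<beta> n)) R"
    using diff by (simp add: algebra_simps)
  ultimately show "a (t - int n) \<in> span (a ` {t - int n + 1..t + int n})"
    using R_span by (auto intro!: span_add span_scale)
qed

lemma range_subset_span_of_symmetric_relation:
  fixes a :: "int \<Rightarrow> 'b"
  assumes shifts: "\<And>t. \<exists>h. Vector_Spaces.linear scale scale h \<and> (\<forall>j. h (a j) = a (j + t))"
    and "1 \<le> n" and "\<beta> n \<noteq> 0"
    and rel: "(\<Sum>i=1..n. scale (\<beta> i) (a (int i) - a (- int i))) = 0"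
  shows "range a \<subseteq> span (a ` {- int n..int n - 1})"
proof -
  let ?W = "span (a ` {- int n..int n - 1})"
  have outer: "a (t + int n) \<in> span (a ` {t - int n..t + int n - 1})"
    "a (t - int n) \<in> span (a ` {t - int n + 1..t + int n})" for t
    using shifts[of t] outer_axes_in_span[OF \<open>\<beta> n \<noteq> 0\<close> \<open>1 \<le> n\<close> shifted_symmetric_relation[OF _ _ rel]]
    by blast+
  have cover: "a ` {- int n - int N..int n - 1 + int N} \<subseteq> ?W" for N
  proof (induction N)
    case 0
    show ?case by (simp add: span_superset)
  next
    case (Suc N)
    let ?S = "{- int n - int N..int n - 1 + int N}"
    have IH: "span (a ` ?S) \<subseteq> ?W"
      using Suc.IH by (rule span_minimal) (rule subspace_span)
    have "span (a ` {int N - int n..int N + int n - 1}) \<subseteq> span (a ` ?S)"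
      "span (a ` {- int N - 1 - int n + 1..- int N - 1 + int n}) \<subseteq> span (a ` ?S)"
      by (intro span_mono image_mono; auto)+
    then have new: "a (int N + int n) \<in> ?W" "a (- int N - 1 - int n) \<in> ?W"
      using outer[of "int N"] outer[of "- int N - 1"] IH by (auto simp: add.commute)
    have "{- int n - int (Suc N)..int n - 1 + int (Suc N)}
        = insert (int N + int n) (insert (- int N - 1 - int n) ?S)"
      by auto
    then show ?case using Suc.IH new by simp
  qed
  show ?thesis
  proof
    fix z assume "z \<in> range a"
    then obtain j where "z = a j" by blast
    moreover have "j \<in> {- int n - int (nat \<bar>j\<bar>)..int n - 1 + int (nat \<bar>j\<bar>)}"
      using \<open>1 \<le> n\<close> by auto
    ultimately show "z \<in> ?W" using cover by blast
  qed
qed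

lemma adim_bound_of_symmetric_relation:
  fixes a :: "int \<Rightarrow> 'b"
  assumes shifts: "\<And>t. \<exists>h. Vector_Spaces.linear scale scale h \<and> (\<forall>j. h (a j) = a (j + t))"
    and "1 \<le> n" and "\<beta> n \<noteq> 0"
    and rel: "(\<Sum>i=1..n. scale (\<beta> i) (a (int i) - a (- int i))) = 0"
  shows "adim scale a \<le> enat (2 * n) \<and> (adim scale a = enat (2 * n) \<longrightarrow> odd_relation scale a)"
proof
  let ?B = "a ` {- int n..int n - 1}"
  have range: "range a \<subseteq> span ?B"
    by (rule range_subset_span_of_symmetric_relation[OF assms])
  have "?B \<subseteq> span (range a)"
    by (auto intro: span_base)
  with range have "span ?B = span (range a)"
    by (simp only: span_eq)
  moreover have "dim (range a) \<le> 2 * n"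
  proof -
    have "dim (range a) \<le> card ?B" using range by (rule dim_le_card) simp
    also have "\<dots> \<le> card {- int n..int n - 1}" by (rule card_image_le) simp
    finally show ?thesis by simp
  qed
  ultimately show "adim scale a \<le> enat (2 * n)"
    unfolding adim_def by auto
  show "adim scale a = enat (2 * n) \<longrightarrow> odd_relation scale a"
    unfolding odd_relation_def using assms(2-) by blast
qed

end

definition zero_ext :: "nat \<Rightarrow> nat \<Rightarrow> (nat \<Rightarrow> 'a::zero) \<Rightarrow> int \<Rightarrow> 'a" where
  "zero_ext lo hi g j = (if int lo \<le> j \<and> j \<le> int hi then g (nat j) else 0)"

(* Only the direction "equal coefficients on the window give equal vectors" is ever used, so no
   independence of the a_m is needed. *)
definition lincomb :: "('a \<Rightarrow> 'm \<Rightarrow> 'm::comm_monoid_add) \<Rightarrow> (int \<Rightarrow> 'm) \<Rightarrow> nat \<Rightarrow> (int \<Rightarrow> 'a) \<Rightarrow> 'm"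
  where "lincomb sc a N c = (\<Sum>m\<in>{- int N..int N}. sc (c m) (a m))"

lemma zero_ext_antisymmetrization:
  fixes Q :: "int \<Rightarrow> 'a::ab_group_add"
  assumes "\<And>j. j > int n \<Longrightarrow> Q j = 0 \<and> Q (- j) = 0"
  shows "zero_ext 1 n (\<lambda>i. Q (int i) - Q (- int i)) j - zero_ext 1 n (\<lambda>i. Q (int i) - Q (- int i)) (- j)
       = Q j - Q (- j)"
  using assms[of j] assms[of "- j"] by (cases "j = 0") (auto simp: zero_ext_def)

lemma palindromic_sum_mirror:
  fixes w :: "nat \<Rightarrow> 'a::comm_semiring_1" and A :: "int \<Rightarrow> 'a"
  assumes "\<And>s. s \<le> r \<Longrightarrow> w (r - s) = w s"
  shows "(\<Sum>s=0..r. w s * A (int s + j)) = (\<Sum>s=0..r. w s * A (int r - int s + j))"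
proof -
  have "(\<Sum>s=0..r. w s * A (int s + j)) = (\<Sum>s=0..r. w (r - s) * A (int s + j))"
    using assms by (intro sum.cong) auto
  also have "\<dots> = (\<Sum>s=0..r. w s * A (int r - int s + j))"
    by (subst sum.atLeastAtMost_rev) (auto intro!: sum.cong simp: of_nat_diff)
  finally show ?thesis .
qed

context vector_space
begin

lemma lincomb_sum:
  "(\<Sum>s\<in>I. lincomb scale a N (c s)) = lincomb scale a N (\<lambda>m. \<Sum>s\<in>I. c s m)"
  unfolding lincomb_def by (simp add: scale_sum_left sum.swap[of _ I])

lemma lincomb_diff:
  "lincomb scale a N c - lincomb scale a N d = lincomb scale a N (\<lambda>m. c m - d m)"
  unfolding lincomb_def by (simp add: scale_left_diff_distrib sum_subtractf)

lemma lincomb_scale: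
  "scale r (lincomb scale a N c) = lincomb scale a N (\<lambda>m. r * c m)"
  unfolding lincomb_def by (simp add: scale_sum_right)

lemma lincomb_cong:
  "(\<And>m. - int N \<le> m \<Longrightarrow> m \<le> int N \<Longrightarrow> c m = d m) \<Longrightarrow> lincomb scale a N c = lincomb scale a N d"
  unfolding lincomb_def by (intro sum.cong) auto

lemma lincomb_reflect:
  "lincomb scale (\<lambda>m. a (- m)) N c = lincomb scale a N (\<lambda>m. c (- m))"
  unfolding lincomb_def by (rule sum.reindex_bij_witness[of _ uminus uminus]) auto

lemma sum_eq_lincomb:
  assumes "- int N \<le> int lo + p" and "int hi + p \<le> int N"
  shows "(\<Sum>i=lo..hi. scale (g i) (a (int i + p))) = lincomb scale a N (\<lambda>m. zero_ext lo hi g (m - p))"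
proof -
  have "(\<Sum>i=lo..hi. scale (g i) (a (int i + p)))
      = (\<Sum>m\<in>(\<lambda>i. int i + p) ` {lo..hi}. scale (zero_ext lo hi g (m - p)) (a m))"
    by (subst sum.reindex) (auto simp: inj_on_def zero_ext_def)
  also have "\<dots> = lincomb scale a N (\<lambda>m. zero_ext lo hi g (m - p))"
    unfolding lincomb_def
  proof (rule sum.mono_neutral_left)
    show "(\<lambda>i. int i + p) ` {lo..hi} \<subseteq> {- int N..int N}"
      using assms by auto
    show "\<forall>m\<in>{- int N..int N} - (\<lambda>i. int i + p) ` {lo..hi}. scale (zero_ext lo hi g (m - p)) (a m) = 0"
    proof
      fix m assume m: "m \<in> {- int N..int N} - (\<lambda>i. int i + p) ` {lo..hi}"
      have "\<not> (int lo \<le> m - p \<and> m - p \<le> int hi)"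
      proof
        assume "int lo \<le> m - p \<and> m - p \<le> int hi"
        then have "m = int (nat (m - p)) + p" "nat (m - p) \<in> {lo..hi}" by auto
        with m show False by blast
      qed
      then show "scale (zero_ext lo hi g (m - p)) (a m) = 0"
        by (simp only: zero_ext_def if_False scale_zero_left)
    qed
  qed simp
  finally show ?thesis .
qed

lemma linear_shift_sum_eq_lincomb:
  fixes a :: "int \<Rightarrow> 'b" and p q s :: int
  assumes lin: "Vector_Spaces.linear scale scale h" and shift: "\<And>j. h (a j) = a (j + s)"
    and "- int N \<le> int lo + p + s" and "int hi + p + s \<le> int N"
    and "- int N \<le> q + s - int hi" and "q + s - int lo \<le> int N"
  shows "h (\<Sum>i=lo..hi. scale (g i) (a (int i + p) - a (q - int i)))
       = lincomb scale a N (\<lambda>m. zero_ext lo hi g (m - p - s) - zero_ext lo hi g (q + s - m))"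
proof -
  interpret h: Vector_Spaces.linear scale scale h by (rule lin)
  have plus: "(\<Sum>i=lo..hi. scale (g i) (a (int i + (p + s))))
      = lincomb scale a N (\<lambda>m. zero_ext lo hi g (m - p - s))"
    using sum_eq_lincomb[of N lo "p + s" hi g a] assms by (simp add: algebra_simps)
  have "(\<Sum>i=lo..hi. scale (g i) (a (q + s - int i)))
      = (\<Sum>i=lo..hi. scale (g i) ((\<lambda>m. a (- m)) (int i + (- q - s))))"
    by (simp add: algebra_simps)
  also have "\<dots> = lincomb scale (\<lambda>m. a (- m)) N (\<lambda>m. zero_ext lo hi g (m - (- q - s)))"
    using assms by (intro sum_eq_lincomb) auto
  finally have minus: "(\<Sum>i=lo..hi. scale (g i) (a (q + s - int i)))
      = lincomb scale a N (\<lambda>m. zero_ext lo hi g (q + s - m))"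
    by (simp add: lincomb_reflect algebra_simps)
  have "h (\<Sum>i=lo..hi. scale (g i) (a (int i + p) - a (q - int i)))
      = (\<Sum>i=lo..hi. scale (g i) (a (int i + (p + s)))) - (\<Sum>i=lo..hi. scale (g i) (a (q + s - int i)))"
    by (simp add: h.sum h.scale h.diff shift sum_subtractf algebra_simps)
  then show ?thesis
    by (simp add: plus minus lincomb_diff)
qed

lemma annihilator_image_eq_lincomb:
  fixes a :: "int \<Rightarrow> 'b" and \<alpha> w :: "nat \<Rightarrow> 'a"
  assumes lin: "Vector_Spaces.linear scale scale f" and shift: "\<And>j. f (a j) = a (j + 1)"
    and "k + r + 1 \<le> N"
  shows "(\<Sum>s=0..r. scale (w s) ((f ^^ s) (\<Sum>i=0..k. scale (\<alpha> i) (a (int i + 1) - a (- int i)))))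
       = lincomb scale a N
           (\<lambda>m. \<Sum>s=0..r. w s * (zero_ext 0 k \<alpha> (m - 1 - int s) - zero_ext 0 k \<alpha> (int s - m)))"
proof -
  have pow: "Vector_Spaces.linear scale scale (f ^^ s)" "\<And>j. (f ^^ s) (a j) = a (j + int s)" for s
    using linear_funpow_shift[where a = a and e = 1, OF lin shift] by simp_all
  have "(\<Sum>s=0..r. scale (w s) ((f ^^ s) (\<Sum>i=0..k. scale (\<alpha> i) (a (int i + 1) - a (0 - int i)))))
      = (\<Sum>s=0..r. scale (w s) (lincomb scale a N
          (\<lambda>m. zero_ext 0 k \<alpha> (m - 1 - int s) - zero_ext 0 k \<alpha> (0 + int s - m))))"
    using assms(3) by (intro sum.cong refl arg_cong[where f = "scale _"] linear_shift_sum_eq_lincomb pow) auto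
  then show ?thesis
    by (simp add: lincomb_scale lincomb_sum)
qed

lemma symmetric_relation_of_palindromic_annihilator:
  fixes a :: "int \<Rightarrow> 'b" and \<alpha> w :: "nat \<Rightarrow> 'a" and d k :: nat
  defines "A \<equiv> zero_ext 0 k \<alpha>"
  defines "Q \<equiv> \<lambda>j. \<Sum>s=0..2*d+1. w s * A (j + int d - int s)"
  assumes lin: "Vector_Spaces.linear scale scale f" and "inj f" and shift: "\<And>j. f (a j) = a (j + 1)"
    and palindromic: "\<And>s. s \<le> 2*d+1 \<Longrightarrow> w (2*d+1-s) = w s"
    and annihilates: "(\<Sum>s=0..2*d+1. scale (w s)
          ((f ^^ s) (\<Sum>i=0..k. scale (\<alpha> i) (a (int i + 1) - a (- int i))))) = 0"
  shows "(\<Sum>i=1..k+d+1. scale (Q (int i) - Q (- int i)) (a (int i) - a (- int i))) = 0"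
proof -
  define N where "N = k + 2*d + 2"
  define B where "B = zero_ext 1 (k+d+1) (\<lambda>i. Q (int i) - Q (- int i))"
  have pow: "Vector_Spaces.linear scale scale (f ^^ s)" "\<And>j. (f ^^ s) (a j) = a (j + int s)" for s
    using linear_funpow_shift[where a = a and e = 1, OF lin shift] by simp_all
  have ann: "lincomb scale a N (\<lambda>m. \<Sum>s=0..2*d+1. w s * (A (m - 1 - int s) - A (int s - m))) = 0"
    using annihilates annihilator_image_eq_lincomb[where a = a and k = k and r = "2*d+1" and N = N and w = w and \<alpha> = \<alpha>, OF lin shift]
    by (simp add: A_def N_def)
  have "(f ^^ (d+1)) (\<Sum>i=1..k+d+1. scale (Q (int i) - Q (- int i)) (a (int i + 0) - a (0 - int i)))
      = lincomb scale a N (\<lambda>m. B (m - 0 - int (d+1)) - B (0 + int (d+1) - m))"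
    unfolding B_def N_def by (rule linear_shift_sum_eq_lincomb pow)+ auto
  also have "\<dots> = lincomb scale a N (\<lambda>m. \<Sum>s=0..2*d+1. w s * (A (m - 1 - int s) - A (int s - m)))"
  proof (rule lincomb_cong)
    fix m
    have "Q j = 0 \<and> Q (- j) = 0" if "j > int (k + d + 1)" for j
      unfolding Q_def using that by (auto intro!: sum.neutral simp: A_def zero_ext_def)
    then have B_odd: "B j - B (- j) = Q j - Q (- j)" for j
      unfolding B_def by (rule zero_ext_antisymmetrization)
    have left: "(\<Sum>s=0..2*d+1. w s * A (m - 1 - int s)) = Q (m - int (d + 1))"
      unfolding Q_def by (simp add: algebra_simps)
    have right: "(\<Sum>s=0..2*d+1. w s * A (int s - m)) = Q (int (d + 1) - m)"
      unfolding Q_def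
      using palindromic_sum_mirror[where r = "2*d+1" and w = w and A = A and j = "- m", OF palindromic]
      by (simp add: algebra_simps)
    show "B (m - 0 - int (d + 1)) - B (0 + int (d + 1) - m)
        = (\<Sum>s=0..2*d+1. w s * (A (m - 1 - int s) - A (int s - m)))"
      by (simp only: diff_0_right add_0_left right_diff_distrib sum_subtractf left right
          B_odd[of "m - int (d + 1)", unfolded minus_diff_eq])
  qed
  finally have image_zero: "(f ^^ (d+1))
      (\<Sum>i=1..k+d+1. scale (Q (int i) - Q (- int i)) (a (int i + 0) - a (0 - int i))) = 0"
    using ann by (rule trans)
  interpret power: Vector_Spaces.linear scale scale "f ^^ (d+1)" by (rule pow)
  show ?thesis
    using image_zero inj_fn[OF \<open>inj f\<close>, of "d+1"] power.zero by (simp del: funpow.simps add: injD)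
qed

(* [1, 2, 2, 1] are the coefficients of (1 + t)(1 + t + t^2). *)
lemma annihilated_by_cubic:
  assumes lin: "Vector_Spaces.linear scale scale f"
    and x: "x + f x + f (f x) = 0" and y: "f y = - y" and S: "x + y + S = 0"
  shows "(\<Sum>s=0..3. scale ([1, 2, 2, 1] ! s) ((f ^^ s) S)) = 0"
proof -
  interpret f: Vector_Spaces.linear scale scale f by (rule lin)
  have S1: "f x - y + f S = 0" using arg_cong[OF S, of f] by (simp add: f.add y)
  have S2: "f (f x) + y + f (f S) = 0" using arg_cong[OF S1, of f] by (simp add: f.add f.diff y)
  have S3: "f (f (f x)) - y + f (f (f S)) = 0" using arg_cong[OF S2, of f] by (simp add: f.add y)
  have x1: "f x + f (f x) + f (f (f x)) = 0" using arg_cong[OF x, of f] by (simp add: f.add)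
  have two: "scale 2 v = v + v" for v
    by (metis one_add_one scale_left_distrib scale_one)
  have "(\<Sum>s=0..3. scale ([1, 2, 2, 1] ! s) ((f ^^ s) S))
      = (x + y + S) + scale 2 (f x - y + f S) + scale 2 (f (f x) + y + f (f S))
        + (f (f (f x)) - y + f (f (f S))) - (x + f x + f (f x)) - (f x + f (f x) + f (f (f x)))"
    by (simp add: eval_nat_numeral two algebra_simps)
  then show ?thesis by (simp add: S S1 S2 S3 x x1)
qed

lemma annihilated_by_linear:
  assumes lin: "Vector_Spaces.linear scale scale f"
    and y: "f y = - y" and S: "y + S = 0"
  shows "(\<Sum>s=0..1. scale ([1, 1] ! s) ((f ^^ s) S)) = 0"
proof -
  interpret f: Vector_Spaces.linear scale scale f by (rule lin)
  have "- y + f S = 0" using arg_cong[OF S, of f] by (simp add: f.add y)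
  then have "(y + S) + (- y + f S) = 0" using S by simp
  then show ?thesis by (simp add: algebra_simps)
qed

lemma relation_of_annihilated_summands:
  fixes a :: "int \<Rightarrow> 'b" and \<alpha> :: "nat \<Rightarrow> 'a"
  assumes lin: "Vector_Spaces.linear scale scale f" and "inj f" and shift: "\<And>j. f (a j) = a (j + 1)"
    and x: "x + f x + f (f x) = 0" and y: "f y = - y"
    and rel: "x + y + (\<Sum>i=0..k. scale (\<alpha> i) (a (int i + 1) - a (- int i))) = 0"
  shows "(\<Sum>i=1..k+2. scale (alpha_ext \<alpha> k (int i + 1) + 2 * alpha_ext \<alpha> k (int i)
            + 2 * alpha_ext \<alpha> k (int i - 1) + alpha_ext \<alpha> k (int i - 2)) (a (int i) - a (- int i))) = 0"
proof -
  let ?A = "zero_ext 0 k \<alpha>"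
  have palindromic: "[1, 2, 2, 1] ! (3 - s) = ([1, 2, 2, 1] ! s :: 'a)" if "s \<le> 3" for s
    using that by (auto simp: numeral_eq_Suc le_Suc_eq)
  have "(\<Sum>i=1..k+1+1. scale ((\<Sum>s=0..2*1+1. [1, 2, 2, 1] ! s * ?A (int i + int 1 - int s))
      - (\<Sum>s=0..2*1+1. [1, 2, 2, 1] ! s * ?A (- int i + int 1 - int s))) (a (int i) - a (- int i))) = 0"
    using annihilated_by_cubic[OF lin x y rel] palindromic
    by (intro symmetric_relation_of_palindromic_annihilator[where a = a, OF lin \<open>inj f\<close> shift]) simp_all
  moreover have "(\<Sum>s=0..2*1+1. [1, 2, 2, 1] ! s * ?A (int i + int 1 - int s))
      - (\<Sum>s=0..2*1+1. [1, 2, 2, 1] ! s * ?A (- int i + int 1 - int s))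
      = alpha_ext \<alpha> k (int i + 1) + 2 * alpha_ext \<alpha> k (int i)
            + 2 * alpha_ext \<alpha> k (int i - 1) + alpha_ext \<alpha> k (int i - 2)" if "1 \<le> i" for i
  proof -
    have expand: "(\<Sum>s=0..2*1+1. [1, 2, 2, 1] ! s * ?A (j + int 1 - int s))
        = ?A (j + 1) + 2 * ?A j + 2 * ?A (j - 1) + ?A (j - 2)" for j
      by (simp add: eval_nat_numeral algebra_simps)
    \<comment> \<open>The mirrored term \<alpha>_0 a_(1-i) survives only for i = 1; it is what
      alpha_ext \<alpha> k (-1) = - \<alpha> 0 records.\<close>
    have "alpha_ext \<alpha> k j = (if j = - 1 then - ?A 0 else ?A j)" for j
      by (simp add: alpha_ext_def zero_ext_def)
    moreover have "?A j = 0" if "j < 0" for j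
      using that by (simp add: zero_ext_def)
    ultimately show ?thesis
      unfolding expand using \<open>1 \<le> i\<close> by (cases "i = 1") simp_all
  qed
  ultimately show ?thesis
    by (metis (no_types, lifting) atLeastAtMost_iff one_add_one add.assoc sum.cong)
qed

lemma relation_of_antiinvariant_summand:
  fixes a :: "int \<Rightarrow> 'b" and \<alpha> :: "nat \<Rightarrow> 'a"
  assumes lin: "Vector_Spaces.linear scale scale f" and "inj f" and shift: "\<And>j. f (a j) = a (j + 1)"
    and y: "f y = - y" and rel: "y + (\<Sum>i=0..k. scale (\<alpha> i) (a (int i + 1) - a (- int i))) = 0"
  shows "(\<Sum>i=1..k+1. scale (zero_ext 0 k \<alpha> (int i) + zero_ext 0 k \<alpha> (int i - 1))
            (a (int i) - a (- int i))) = 0"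
proof -
  let ?A = "zero_ext 0 k \<alpha>"
  have palindromic: "[1, 1] ! (1 - s) = ([1, 1] ! s :: 'a)" if "s \<le> 1" for s
    using that by (auto simp: le_Suc_eq)
  have "(\<Sum>i=1..k+0+1. scale ((\<Sum>s=0..2*0+1. [1, 1] ! s * ?A (int i + int 0 - int s))
      - (\<Sum>s=0..2*0+1. [1, 1] ! s * ?A (- int i + int 0 - int s))) (a (int i) - a (- int i))) = 0"
    using annihilated_by_linear[OF lin y rel] palindromic
    by (intro symmetric_relation_of_palindromic_annihilator[where a = a, OF lin \<open>inj f\<close> shift]) simp_all
  moreover have "(\<Sum>s=0..2*0+1. [1, 1] ! s * ?A (int i + int 0 - int s))
      - (\<Sum>s=0..2*0+1. [1, 1] ! s * ?A (- int i + int 0 - int s))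
      = ?A (int i) + ?A (int i - 1)" if "1 \<le> i" for i
    using that by (simp add: zero_ext_def)
  ultimately show ?thesis
    by (metis (no_types, lifting) atLeastAtMost_iff add_0_right sum.cong)
qed

lemma relation_adim_bound_of_annihilated_summands:
  fixes a :: "int \<Rightarrow> 'b" and \<alpha> :: "nat \<Rightarrow> 'a"
  assumes lin: "Vector_Spaces.linear scale scale f" and "bij f" and shift: "\<And>j. f (a j) = a (j + 1)"
    and x: "x + f x + f (f x) = 0" and y: "f y = - y"
    and rel: "x + y + (\<Sum>i=0..k. scale (\<alpha> i) (a (int i + 1) - a (- int i))) = 0"
  shows "scale (\<alpha> k) (a (int k + 2) - a (- int k - 2)) +
           (\<Sum>i\<in>{1..int k + 1}. scale (alpha_ext \<alpha> k (i + 1) + 2 * alpha_ext \<alpha> k i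
                 + 2 * alpha_ext \<alpha> k (i - 1) + alpha_ext \<alpha> k (i - 2)) (a i - a (- i))) = 0 \<and>
         (\<alpha> k \<noteq> 0 \<longrightarrow> adim scale a \<le> enat (2 * k + 4) \<and>
             (adim scale a = enat (2 * k + 4) \<longrightarrow> odd_relation scale a))"
proof -
  define c where "c i = alpha_ext \<alpha> k (i + 1) + 2 * alpha_ext \<alpha> k i
                 + 2 * alpha_ext \<alpha> k (i - 1) + alpha_ext \<alpha> k (i - 2)" for i
  have top: "c (int (k + 2)) = \<alpha> k"
    by (simp add: c_def alpha_ext_def)
  have rel_sym: "(\<Sum>i=1..k+2. scale (c (int i)) (a (int i) - a (- int i))) = 0"
    unfolding c_def
    by (rule relation_of_annihilated_summands[OF lin bij_is_inj[OF \<open>bij f\<close>] shift x y rel])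
  have shifts: "\<exists>h. Vector_Spaces.linear scale scale h \<and> (\<forall>j. h (a j) = a (j + t))" for t
    by (rule linear_shift_by_int[where a = a, OF lin \<open>bij f\<close> shift])
  have "{1..int k + 1} = int ` {1..k+1}"
    by (simp add: image_int_atLeastAtMost)
  then have "(\<Sum>i\<in>{1..int k + 1}. scale (c i) (a i - a (- i)))
      = (\<Sum>i=1..k+1. scale (c (int i)) (a (int i) - a (- int i)))"
    by (simp only:) (subst sum.reindex, auto)
  then have "scale (\<alpha> k) (a (int k + 2) - a (- int k - 2))
      + (\<Sum>i\<in>{1..int k + 1}. scale (c i) (a i - a (- i))) = 0"
    using rel_sym top by (simp add: add.commute)
  moreover have "2 * (k + 2) = 2 * k + 4" by simp
  with adim_bound_of_symmetric_relation[OF shifts _ _ rel_sym] top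
  have "\<alpha> k \<noteq> 0 \<longrightarrow> adim scale a \<le> enat (2 * k + 4) \<and>
             (adim scale a = enat (2 * k + 4) \<longrightarrow> odd_relation scale a)"
    by (simp only:) simp
  ultimately show ?thesis by (simp add: c_def)
qed

lemma relation_adim_bound_of_antiinvariant_summand:
  fixes a :: "int \<Rightarrow> 'b" and \<alpha> :: "nat \<Rightarrow> 'a"
  assumes lin: "Vector_Spaces.linear scale scale f" and "bij f" and shift: "\<And>j. f (a j) = a (j + 1)"
    and y: "f y = - y" and rel: "y + (\<Sum>i=0..k. scale (\<alpha> i) (a (int i + 1) - a (- int i))) = 0"
  shows "scale (\<alpha> k) (a (int k + 1) - a (- int k - 1)) +
           (\<Sum>i=1..k. scale (\<alpha> i + \<alpha> (i - 1)) (a (int i) - a (- int i))) = 0 \<and>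
         (\<alpha> k \<noteq> 0 \<longrightarrow> adim scale a \<le> enat (2 * k + 2) \<and>
             (adim scale a = enat (2 * k + 2) \<longrightarrow> odd_relation scale a))"
proof -
  define c where "c i = zero_ext 0 k \<alpha> (int i) + zero_ext 0 k \<alpha> (int i - 1)" for i
  have top: "c (k + 1) = \<alpha> k"
    by (simp add: c_def zero_ext_def)
  have rel_sym: "(\<Sum>i=1..k+1. scale (c i) (a (int i) - a (- int i))) = 0"
    unfolding c_def
    by (rule relation_of_antiinvariant_summand[OF lin bij_is_inj[OF \<open>bij f\<close>] shift y rel])
  have shifts: "\<exists>h. Vector_Spaces.linear scale scale h \<and> (\<forall>j. h (a j) = a (j + t))" for t
    by (rule linear_shift_by_int[where a = a, OF lin \<open>bij f\<close> shift])
  have low: "(\<Sum>i=1..k. scale (c i) (a (int i) - a (- int i)))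
      = (\<Sum>i=1..k. scale (\<alpha> i + \<alpha> (i - 1)) (a (int i) - a (- int i)))"
    by (rule sum.cong) (auto simp: c_def zero_ext_def intro!: arg_cong[where f = \<alpha>])
  have "(\<Sum>i=1..k+1. g i) = g (k + 1) + (\<Sum>i=1..k. g i)" for g :: "nat \<Rightarrow> 'b"
    by (simp add: add.commute)
  moreover have "int (k + 1) = int k + 1" "- int (k + 1) = - int k - 1" by simp_all
  ultimately have "scale (\<alpha> k) (a (int k + 1) - a (- int k - 1))
      + (\<Sum>i=1..k. scale (\<alpha> i + \<alpha> (i - 1)) (a (int i) - a (- int i))) = 0"
    using rel_sym top low by (simp only:)
  moreover have "2 * (k + 1) = 2 * k + 2" by simp
  with adim_bound_of_symmetric_relation[OF shifts _ _ rel_sym] top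
  have "\<alpha> k \<noteq> 0 \<longrightarrow> adim scale a \<le> enat (2 * k + 2) \<and>
             (adim scale a = enat (2 * k + 2) \<longrightarrow> odd_relation scale a)"
    by (simp only:) simp
  ultimately show ?thesis by blast
qed

end

theorem lemma1:
  fixes sc :: "'a::field \<Rightarrow> 'm::ab_group_add \<Rightarrow> 'm"
    and mul :: "'m \<Rightarrow> 'm \<Rightarrow> 'm"
    and eta :: 'a
    and a :: "int \<Rightarrow> 'm"
    and D :: "int \<Rightarrow> nat \<Rightarrow> 'm set"
    and x y :: 'm
    and \<alpha> :: "nat \<Rightarrow> 'a"
    and k :: nat
  assumes char: "(2::'a) \<noteq> 0"
    and eta: "eta \<noteq> 0" "eta \<noteq> 1" "eta \<noteq> 1 / 2"
    and dih: "dihedral sc mul eta a D"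
    and x1: "fsh sc mul a 2 x = - tau (D 0) x"
    and x2: "fsh sc mul a 3 x = x"
    and x3: "x + fsh sc mul a 1 x + fsh sc mul a 2 x = 0"
    and y1: "fsh sc mul a 1 y = - y"
    and y2: "tau (D 0) y = y"
    and rel: "x + y + (\<Sum>i\<in>{0..k}. sc (\<alpha> i) (a (int i + 1) - a (- int i))) = 0"
  shows "(sc (\<alpha> k) (a (int k + 2) - a (- int k - 2)) +
           (\<Sum>i\<in>{1..int k + 1}. sc (alpha_ext \<alpha> k (i + 1) + 2 * alpha_ext \<alpha> k i
                 + 2 * alpha_ext \<alpha> k (i - 1) + alpha_ext \<alpha> k (i - 2)) (a i - a (- i))) = 0 \<and>
         (\<alpha> k \<noteq> 0 \<longrightarrow> adim sc a \<le> enat (2 * k + 4) \<and>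
             (adim sc a = enat (2 * k + 4) \<longrightarrow> odd_relation sc a)))
       \<and> (x = 0 \<longrightarrow>
         sc (\<alpha> k) (a (int k + 1) - a (- int k - 1)) +
           (\<Sum>i\<in>{1..k}. sc (\<alpha> i + \<alpha> (i - 1)) (a (int i) - a (- int i))) = 0 \<and>
         (\<alpha> k \<noteq> 0 \<longrightarrow> adim sc a \<le> enat (2 * k + 2) \<and>
             (adim sc a = enat (2 * k + 2) \<longrightarrow> odd_relation sc a)))"
proof -
  obtain f where vs: "vector_space sc" and lin: "Vector_Spaces.linear sc sc f" and "bij f"
    and shift: "\<And>j. f (a j) = a (j + 1)" and f1: "fsh sc mul a 1 = f" and f2: "fsh sc mul a 2 = f \<circ> f"
    using dihedral_shift_automorphism[OF dih] by blast
  interpret vector_space sc by (rule vs)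
  have x: "x + f x + f (f x) = 0" using x3 by (simp add: f1 f2)
  have y: "f y = - y" using y1 by (simp add: f1)
  have y_rel: "y + (\<Sum>i=0..k. sc (\<alpha> i) (a (int i + 1) - a (- int i))) = 0" if "x = 0"
    using rel that by simp
  show ?thesis
    using relation_adim_bound_of_annihilated_summands[where a = a, OF lin \<open>bij f\<close> shift x y rel]
      relation_adim_bound_of_antiinvariant_summand[where a = a, OF lin \<open>bij f\<close> shift y y_rel]
    by blast
qed

end
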